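(* For all $\delta\in(0,1)$, $n\ge 14\log\frac{4}{\delta}$ and $\varepsilon\in\left(\frac{\sqrt{3456}}{n}\log\frac{4}{\delta},1\right)$, the bit-sum protocol $P_{n,\lambda}$ is $(\varepsilon,\delta)$-differentially private in the shuffled model if \[ \lambda=\begin{cases}\dfrac{64}{\varepsilon^2}\log\dfrac{4}{\delta} & \text{if } \varepsilon\ge\sqrt{\dfrac{192}{n}\log\dfrac{4}{\delta}},\\[2mm] n-\dfrac{\varepsilon n^{3/2}}{\sqrt{432\log(4/\delta)}} & \text{otherwise.}\end{cases} \]
   Context: An algorithm $M$ on datasets in $\{0,1\}^n$ is $(\varepsilon,\delta)$-differentially private if for all $X,X'$ differing in one user's entry and every set $T$ of outputs, $\Pr[M(X)\in T]\le e^{\varepsilon}\Pr[M(X')\in T]+\delta$. The bit-sum protocol $P_{n,\lambda}$: each of $n$ users with $x_i\in\{0,1\}$ independently draws $b\sim\mathrm{Ber}(\lambda/n)$ and sends the single message $y_i=x_i$ if $b=0$ and a fresh $\mathrm{Ber}(1/2)$ bit if $b=1$; a shuffler outputs the messages in uniformly random order; the analyzer outputs $\frac{n}{n-\lambda}(\sum_i y_i-\lambda/2)$. The protocol is $(\varepsilon,\delta)$-differentially private in the shuffled model if the map from $(x_1,\dots,x_n)$ to the shuffled sequence of messages is $(\varepsilon,\delta)$-differentially private. $\log$ is the natural logarithm. *)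

theory Defs
  imports "HOL-Probability.Probability"
begin

definition bitsum_randomizer :: "nat \<Rightarrow> real \<Rightarrow> bool \<Rightarrow> bool pmf" where
  "bitsum_randomizer n lam x =
     bind_pmf (bernoulli_pmf (lam / real n))
       (\<lambda>b. if b then bernoulli_pmf (1/2) else return_pmf x)"

fun bitsum_local :: "nat \<Rightarrow> real \<Rightarrow> bool list \<Rightarrow> bool list pmf" where
  "bitsum_local n lam [] = return_pmf []"
| "bitsum_local n lam (x # xs) =
     bind_pmf (bitsum_randomizer n lam x)
       (\<lambda>y. map_pmf (\<lambda>ys. y # ys) (bitsum_local n lam xs))"

definition shuffler :: "'a list \<Rightarrow> 'a list pmf" where
  "shuffler ys =
     map_pmf (\<lambda>\<sigma>. map (\<lambda>i. ys ! \<sigma> i) [0..<length ys])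
       (pmf_of_set {\<sigma>. \<sigma> permutes {0..<length ys}})"

definition bitsum_shuffled :: "nat \<Rightarrow> real \<Rightarrow> bool list \<Rightarrow> bool list pmf" where
  "bitsum_shuffled n lam X = bind_pmf (bitsum_local n lam X) shuffler"

definition neighbours :: "nat \<Rightarrow> 'a list \<Rightarrow> 'a list \<Rightarrow> bool" where
  "neighbours n X X' \<longleftrightarrow> length X = n \<and> length X' = n \<and>
     (\<exists>i<n. \<forall>j<n. j \<noteq> i \<longrightarrow> X ! j = X' ! j)"

definition diff_private :: "nat \<Rightarrow> real \<Rightarrow> real \<Rightarrow> ('a list \<Rightarrow> 'b pmf) \<Rightarrow> bool" where
  "diff_private n \<epsilon> \<delta> M \<longleftrightarrow>
     (\<forall>X X' T. neighbours n X X' \<longrightarrow>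
        measure_pmf.prob (M X) T \<le> exp \<epsilon> * measure_pmf.prob (M X') T + \<delta>)"

end

(*
  The shuffled messages are determined by the number of True messages, so it suffices to compare
  the distributions of this count for datasets differing in the bit of user i. Condition on which
  of the other n - 1 users send a uniform bit: if h of them do, the count is a fixed number plus
  user i's message plus a Binomial(h, 1/2) "blanket". Once h is at least half its mean
  (n - 1) lam / n, which fails with probability at most exp (-L) by a Chernoff bound, the blanket
  hides user i: counts near (h + 1) / 2 have probabilities within a factor exp eps whatever the
  bit, and by Hoeffding's inequality the other counts have probability at most 2 exp (-L).
  Averaging over the blanket gives (eps, 3 exp (-L))-indistinguishability with L = ln (4 / delta),
  and both choices of lam make the two conditions on h hold.
*)

theory Submission
  imports Defs
begin

section \<open>Indistinguishability of distributions\<close>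

lemma integrable_measure_pmf_bounded:
  fixes f :: "'a \<Rightarrow> real"
  assumes "\<And>x. \<bar>f x\<bar> \<le> B"
  shows "integrable (measure_pmf M) f"
  using assms by (intro measure_pmf.integrable_const_bound[where B = B]) auto

lemma expectation_bind_pmf:
  fixes f :: "'b \<Rightarrow> real"
  assumes "\<And>x. \<bar>f x\<bar> \<le> B"
  shows "measure_pmf.expectation (bind_pmf M N) f =
         measure_pmf.expectation M (\<lambda>x. measure_pmf.expectation (N x) f)"
  using measurable_measure_pmf[of N] assms unfolding measure_pmf_bind
  by (intro integral_bind[where K = "count_space UNIV" and B = B and B' = 1])
     (auto simp: measure_pmf.emeasure_space_1 measure_pmf.finite_measure_axioms)

lemma prob_bind_pmf:
  "measure_pmf.prob (bind_pmf M N) A = measure_pmf.expectation M (\<lambda>x. measure_pmf.prob (N x) A)"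
  using expectation_bind_pmf[of "indicator A" 1 M N] by (simp add: indicator_def)

lemma expectation_unit_interval:
  fixes f :: "'a \<Rightarrow> real"
  assumes "\<And>x. 0 \<le> f x \<and> f x \<le> 1"
  shows "0 \<le> measure_pmf.expectation M f \<and> measure_pmf.expectation M f \<le> 1"
proof
  show "0 \<le> measure_pmf.expectation M f"
    using assms by (intro integral_nonneg_AE) auto
  show "measure_pmf.expectation M f \<le> 1"
    using assms
    by (intro measure_pmf.integral_le_const integrable_measure_pmf_bounded[where B = 1]) auto
qed

text \<open>Tests are \<open>[0,1]\<close>-valued functions rather than events, so that the notion is preserved
  by randomised post-processing.\<close>
definition indistinguishable :: "real \<Rightarrow> real \<Rightarrow> 'a pmf \<Rightarrow> 'a pmf \<Rightarrow> bool" where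
  "indistinguishable \<epsilon> \<delta> P Q \<longleftrightarrow> (\<forall>f. (\<forall>x. 0 \<le> f x \<and> f x \<le> 1) \<longrightarrow>
      measure_pmf.expectation P f \<le> exp \<epsilon> * measure_pmf.expectation Q f + \<delta>)"

lemma indistinguishableD:
  "indistinguishable \<epsilon> \<delta> P Q \<Longrightarrow> (\<And>x. 0 \<le> f x \<and> f x \<le> 1) \<Longrightarrow>
     measure_pmf.expectation P f \<le> exp \<epsilon> * measure_pmf.expectation Q f + \<delta>"
  unfolding indistinguishable_def by blast

lemma indistinguishable_mono:
  "indistinguishable \<epsilon> \<delta> P Q \<Longrightarrow> \<delta> \<le> \<delta>' \<Longrightarrow> indistinguishable \<epsilon> \<delta>' P Q"
  unfolding indistinguishable_def by (meson add_left_mono order_trans)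

lemma indistinguishable_trivial: "1 \<le> \<delta> \<Longrightarrow> indistinguishable \<epsilon> \<delta> P Q"
  unfolding indistinguishable_def
proof (intro allI impI)
  fix f :: "'a \<Rightarrow> real" assume \<delta>: "1 \<le> \<delta>" and f: "\<forall>x. 0 \<le> f x \<and> f x \<le> 1"
  then have "measure_pmf.expectation P f \<le> 1" "0 \<le> measure_pmf.expectation Q f"
    using expectation_unit_interval by blast+
  moreover have "0 \<le> exp \<epsilon> * measure_pmf.expectation Q f" using calculation(2) by simp
  ultimately show "measure_pmf.expectation P f \<le> exp \<epsilon> * measure_pmf.expectation Q f + \<delta>"
    using \<delta> by linarith
qed

lemma indistinguishable_map_pmf:
  "indistinguishable \<epsilon> \<delta> P Q \<Longrightarrow> indistinguishable \<epsilon> \<delta> (map_pmf g P) (map_pmf g Q)"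
  unfolding indistinguishable_def by auto

lemma indistinguishable_prob_bind_pmf:
  assumes "indistinguishable \<epsilon> \<delta> P Q"
  shows "measure_pmf.prob (bind_pmf P g) T \<le> exp \<epsilon> * measure_pmf.prob (bind_pmf Q g) T + \<delta>"
  unfolding prob_bind_pmf by (rule indistinguishableD[OF assms]) auto

lemma indistinguishable_bind_pmf:
  assumes comp: "\<And>x. x \<in> set_pmf M \<Longrightarrow> indistinguishable \<epsilon> (\<delta> x) (P x) (Q x)"
    and \<delta>: "\<And>x. 0 \<le> \<delta> x \<and> \<delta> x \<le> D"
  shows "indistinguishable \<epsilon> (measure_pmf.expectation M \<delta>) (bind_pmf M P) (bind_pmf M Q)"
  unfolding indistinguishable_def
proof (intro allI impI)
  fix f :: "'b \<Rightarrow> real" assume f: "\<forall>x. 0 \<le> f x \<and> f x \<le> 1"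
  define EP where "EP x = measure_pmf.expectation (P x) f" for x
  define EQ where "EQ x = measure_pmf.expectation (Q x) f" for x
  have EP: "0 \<le> EP x \<and> EP x \<le> 1" and EQ: "0 \<le> EQ x \<and> EQ x \<le> 1" for x
    unfolding EP_def EQ_def using f expectation_unit_interval by blast+
  have int_EQ: "integrable (measure_pmf M) EQ"
    using EQ by (intro integrable_measure_pmf_bounded[where B = 1]) auto
  have int_\<delta>: "integrable (measure_pmf M) \<delta>"
    using \<delta> by (intro integrable_measure_pmf_bounded[where B = D]) (simp add: abs_le_iff)
  have "measure_pmf.expectation (bind_pmf M P) f = measure_pmf.expectation M EP"
    unfolding EP_def using f by (intro expectation_bind_pmf[where B = 1]) auto
  also have "\<dots> \<le> measure_pmf.expectation M (\<lambda>x. exp \<epsilon> * EQ x + \<delta> x)"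
  proof (intro integral_mono_AE)
    show "integrable (measure_pmf M) EP"
      using EP by (intro integrable_measure_pmf_bounded[where B = 1]) auto
    show "integrable (measure_pmf M) (\<lambda>x. exp \<epsilon> * EQ x + \<delta> x)"
      using int_EQ int_\<delta> by simp
    show "AE x in measure_pmf M. EP x \<le> exp \<epsilon> * EQ x + \<delta> x"
      unfolding AE_measure_pmf_iff EP_def EQ_def using comp f indistinguishableD by blast
  qed
  also have "\<dots> = exp \<epsilon> * measure_pmf.expectation M EQ + measure_pmf.expectation M \<delta>"
    using int_EQ int_\<delta> by simp
  also have "measure_pmf.expectation M EQ = measure_pmf.expectation (bind_pmf M Q) f"
    unfolding EQ_def using f by (intro expectation_bind_pmf[symmetric, where B = 1]) auto
  finally show "measure_pmf.expectation (bind_pmf M P) f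
      \<le> exp \<epsilon> * measure_pmf.expectation (bind_pmf M Q) f + measure_pmf.expectation M \<delta>" .
qed

lemma indistinguishable_pointwise:
  fixes P Q :: "'a pmf"
  assumes A: "finite A" "set_pmf P \<subseteq> A" "set_pmf Q \<subseteq> A"
    and good: "\<And>x. x \<in> G \<Longrightarrow> pmf P x \<le> exp \<epsilon> * pmf Q x"
    and bad: "measure_pmf.prob P (- G) \<le> \<delta>"
  shows "indistinguishable \<epsilon> \<delta> P Q"
  unfolding indistinguishable_def
proof (intro allI impI)
  fix f :: "'a \<Rightarrow> real" assume f: "\<forall>x. 0 \<le> f x \<and> f x \<le> 1"
  have E: "measure_pmf.expectation R f = (\<Sum>x\<in>A. f x * pmf R x)" if "set_pmf R \<subseteq> A" for R
    using A(1) that by (intro integral_measure_pmf_real) auto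
  have "(\<Sum>x\<in>A \<inter> G. f x * pmf P x) \<le> (\<Sum>x\<in>A \<inter> G. f x * (exp \<epsilon> * pmf Q x))"
    using f good by (intro sum_mono mult_left_mono) auto
  also have "\<dots> \<le> (\<Sum>x\<in>A. f x * (exp \<epsilon> * pmf Q x))"
    using f A(1) by (intro sum_mono2) auto
  also have "\<dots> = exp \<epsilon> * measure_pmf.expectation Q f"
    unfolding E[OF A(3)] sum_distrib_left by (simp add: algebra_simps)
  finally have on_G: "(\<Sum>x\<in>A \<inter> G. f x * pmf P x) \<le> exp \<epsilon> * measure_pmf.expectation Q f" .
  have "(\<Sum>x\<in>A - G. f x * pmf P x) \<le> (\<Sum>x\<in>A - G. pmf P x)"
    using f by (intro sum_mono) (auto intro: mult_left_le_one_le)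
  also have "\<dots> = measure_pmf.prob P (A - G)"
    using A(1) by (simp add: measure_measure_pmf_finite)
  also have "\<dots> \<le> measure_pmf.prob P (- G)"
    by (rule measure_pmf.finite_measure_mono) auto
  also have "\<dots> \<le> \<delta>" by (rule bad)
  finally have off_G: "(\<Sum>x\<in>A - G. f x * pmf P x) \<le> \<delta>" .
  show "measure_pmf.expectation P f \<le> exp \<epsilon> * measure_pmf.expectation Q f + \<delta>"
    unfolding E[OF A(2)] sum.Int_Diff[OF A(1), of _ G] using on_G off_G by linarith
qed

section \<open>Reduction to the number of True messages\<close>

definition count_true :: "bool list \<Rightarrow> nat" where
  "count_true ys = length (filter id ys)"

definition sorted_bits :: "nat \<Rightarrow> nat \<Rightarrow> bool list" where
  "sorted_bits m c = replicate c True @ replicate (m - c) False"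

lemma shuffler_cong_mset:
  assumes "mset ys = mset zs"
  shows "shuffler ys = shuffler zs"
proof -
  obtain \<pi> where \<pi>: "\<pi> permutes {..<length zs}" "permute_list \<pi> zs = ys"
    using mset_eq_permutation[OF assms] by blast
  have len: "length ys = length zs" using \<pi>(2) by auto
  define S where "S = {\<sigma>. \<sigma> permutes {..<length zs}}"
  have S: "finite S" "S \<noteq> {}"
    unfolding S_def by (rule finite_permutations, simp) (use permutes_id in blast)
  have img: "(\<lambda>\<sigma>. \<pi> \<circ> \<sigma>) ` S = S"
    using image_compose_permutations_left[OF \<pi>(1)] unfolding S_def by (simp add: setcompr_eq_image)
  have inj: "inj_on (\<lambda>\<sigma>. \<pi> \<circ> \<sigma>) S"
  proof (rule inj_onI)
    fix \<sigma> \<tau> assume "\<pi> \<circ> \<sigma> = \<pi> \<circ> \<tau>"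
    then have "\<pi> (\<sigma> a) = \<pi> (\<tau> a)" for a by (metis comp_apply)
    then show "\<sigma> = \<tau>" using injD[OF permutes_inj[OF \<pi>(1)]] by (intro ext) blast
  qed
  have "shuffler ys = map_pmf (\<lambda>\<sigma>. map (\<lambda>i. zs ! \<sigma> i) [0..<length zs])
                        (map_pmf (\<lambda>\<sigma>. \<pi> \<circ> \<sigma>) (pmf_of_set S))"
    unfolding shuffler_def map_pmf_comp len atLeast0LessThan S_def[symmetric]
  proof (intro map_pmf_cong refl)
    fix \<sigma> assume "\<sigma> \<in> set_pmf (pmf_of_set S)"
    then have s: "\<sigma> permutes {..<length zs}" using S unfolding S_def by auto
    show "map (\<lambda>i. ys ! \<sigma> i) [0..<length zs] = map (\<lambda>i. zs ! (\<pi> \<circ> \<sigma>) i) [0..<length zs]"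
    proof (intro map_cong refl)
      fix i assume "i \<in> set [0..<length zs]"
      then have "i < length zs" by simp
      then have "\<sigma> i < length zs" using permutes_in_image[OF s] by simp
      then show "ys ! \<sigma> i = zs ! (\<pi> \<circ> \<sigma>) i"
        using permute_list_nth[OF \<pi>(1)] \<pi>(2) by force
    qed
  qed
  also have "map_pmf (\<lambda>\<sigma>. \<pi> \<circ> \<sigma>) (pmf_of_set S) = pmf_of_set S"
    using map_pmf_of_set_inj[OF inj S(2) S(1)] img by simp
  finally show ?thesis unfolding shuffler_def S_def atLeast0LessThan .
qed

lemma mset_sorted_bits: "mset ys = mset (sorted_bits (length ys) (count_true ys))"
proof (induction ys)
  case Nil
  then show ?case by (simp add: sorted_bits_def count_true_def)
next
  case (Cons y ys)
  have "count_true ys \<le> length ys" unfolding count_true_def by simp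
  then have "Suc (length ys) - count_true ys = Suc (length ys - count_true ys)" by simp
  with Cons show ?case by (cases y) (simp_all add: sorted_bits_def count_true_def)
qed

lemma length_bitsum_local: "ys \<in> set_pmf (bitsum_local n lam X) \<Longrightarrow> length ys = length X"
  by (induction X arbitrary: ys) auto

definition count_dist :: "nat \<Rightarrow> real \<Rightarrow> bool list \<Rightarrow> nat pmf" where
  "count_dist n lam X = map_pmf count_true (bitsum_local n lam X)"

lemma bitsum_shuffled_conv_count_dist:
  "bitsum_shuffled n lam X = bind_pmf (count_dist n lam X) (\<lambda>c. shuffler (sorted_bits (length X) c))"
  unfolding bitsum_shuffled_def count_dist_def bind_map_pmf
proof (intro bind_pmf_cong refl)
  fix ys assume "ys \<in> set_pmf (bitsum_local n lam X)"
  then have "length ys = length X" by (rule length_bitsum_local)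
  then show "shuffler ys = shuffler (sorted_bits (length X) (count_true ys))"
    using mset_sorted_bits[of ys] by (metis shuffler_cong_mset)
qed

lemma count_dist_Nil: "count_dist n lam [] = return_pmf 0"
  by (simp add: count_dist_def count_true_def)

lemma count_dist_Cons:
  "count_dist n lam (x # xs) = bind_pmf (bitsum_randomizer n lam x)
     (\<lambda>y. map_pmf (\<lambda>c. (if y then 1 else 0) + c) (count_dist n lam xs))"
  by (auto simp: count_dist_def map_bind_pmf map_pmf_comp count_true_def
           intro!: bind_pmf_cong map_pmf_cong)

section \<open>The privacy blanket\<close>

text \<open>For the users
  in \<open>xs\<close>, \<open>blanket_split p xs\<close> is the joint distribution of the number of reported true bits
  that are \<open>True\<close> and of the number of uniform bits (the ``privacy blanket'').\<close>
fun blanket_split :: "real \<Rightarrow> bool list \<Rightarrow> (nat \<times> nat) pmf" where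
  "blanket_split p [] = return_pmf (0, 0)"
| "blanket_split p (x # xs) = bind_pmf (bernoulli_pmf p)
     (\<lambda>b. map_pmf (\<lambda>(t, h). if b then (t, Suc h) else (t + (if x then 1 else 0), h))
       (blanket_split p xs))"

lemma blanket_size_binomial:
  assumes "p \<in> {0..1}"
  shows "map_pmf snd (blanket_split p xs) = binomial_pmf (length xs) p"
proof (induction xs)
  case Nil
  then show ?case using assms by (simp add: binomial_pmf_0)
next
  case (Cons x xs)
  have "map_pmf snd (blanket_split p (x # xs)) = bind_pmf (bernoulli_pmf p)
          (\<lambda>b. map_pmf (\<lambda>h. (if b then 1 else 0) + h) (map_pmf snd (blanket_split p xs)))"
    by (auto simp: map_bind_pmf map_pmf_comp split: prod.splits intro!: bind_pmf_cong map_pmf_cong)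
  also have "\<dots> = binomial_pmf (length (x # xs)) p"
    unfolding Cons using assms by (simp add: binomial_pmf_Suc map_pmf_def)
  finally show ?case .
qed

definition plus_blanket :: "bool pmf \<Rightarrow> nat \<Rightarrow> nat pmf" where
  "plus_blanket D h = bind_pmf D (\<lambda>y. map_pmf (\<lambda>u. (if y then 1 else 0) + u) (binomial_pmf h (1/2)))"

lemma binomial_pmf_half_Suc:
  "binomial_pmf (Suc h) (1/2) = bind_pmf (bernoulli_pmf (1/2))
     (\<lambda>y. map_pmf (\<lambda>u. (if y then 1 else 0) + u) (binomial_pmf h (1/2)))"
  by (subst binomial_pmf_Suc) (auto simp: map_pmf_def)

lemma plus_blanket_Suc:
  "plus_blanket D (Suc h) = bind_pmf (bernoulli_pmf (1/2))
     (\<lambda>y. map_pmf (\<lambda>u. (if y then 1 else 0) + u) (plus_blanket D h))"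
proof -
  have "plus_blanket D (Suc h) = bind_pmf D (\<lambda>y'. bind_pmf (bernoulli_pmf (1/2))
     (\<lambda>y. map_pmf (\<lambda>u. (if y' then 1 else 0) + ((if y then 1 else 0) + u)) (binomial_pmf h (1/2))))"
    unfolding plus_blanket_def binomial_pmf_half_Suc by (simp add: map_bind_pmf map_pmf_comp)
  also have "\<dots> = bind_pmf (bernoulli_pmf (1/2)) (\<lambda>y. bind_pmf D
     (\<lambda>y'. map_pmf (\<lambda>u. (if y' then 1 else 0) + ((if y then 1 else 0) + u)) (binomial_pmf h (1/2))))"
    by (rule bind_commute_pmf)
  also have "\<dots> = bind_pmf (bernoulli_pmf (1/2))
     (\<lambda>y. map_pmf (\<lambda>u. (if y then 1 else 0) + u) (plus_blanket D h))"
    unfolding plus_blanket_def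
    by (auto simp: map_bind_pmf map_pmf_comp add_ac intro!: bind_pmf_cong map_pmf_cong)
  finally show ?thesis .
qed

lemma bind_randomizer_blanket_split:
  fixes G :: "nat \<Rightarrow> nat pmf"
  assumes G_Suc: "\<And>h. G (Suc h) = bind_pmf (bernoulli_pmf (1/2))
                     (\<lambda>y. map_pmf (\<lambda>u. (if y then 1 else 0) + u) (G h))"
  defines "K \<equiv> \<lambda>(t, h). map_pmf (\<lambda>u. t + u) (G h)"
  shows "bind_pmf (bitsum_randomizer n lam x) (\<lambda>y. map_pmf (\<lambda>c. (if y then 1 else 0) + c)
            (bind_pmf (blanket_split (lam / real n) ys) K))
       = bind_pmf (blanket_split (lam / real n) (x # ys)) K"
proof -
  define p where "p = lam / real n"
  define F where "F b = (\<lambda>(t :: nat, h :: nat). if b then (t, Suc h) else (t + (if x then 1 else 0), h))" for b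
  have K_F_True: "K (F True z) = bind_pmf (bernoulli_pmf (1/2))
      (\<lambda>y. map_pmf (\<lambda>c. (if y then 1 else 0) + c) (K z))" for z
    by (cases z) (auto simp: K_def F_def G_Suc map_bind_pmf map_pmf_comp add_ac
                       intro!: bind_pmf_cong map_pmf_cong)
  have K_F_False: "K (F False z) = map_pmf (\<lambda>c. (if x then 1 else 0) + c) (K z)" for z
    by (cases z) (auto simp: K_def F_def map_pmf_comp add_ac intro!: map_pmf_cong)
  have step: "bind_pmf (if b then bernoulli_pmf (1/2) else return_pmf x)
            (\<lambda>y. map_pmf (\<lambda>c. (if y then 1 else 0) + c) (bind_pmf (blanket_split p ys) K))
          = bind_pmf (blanket_split p ys) (\<lambda>z. K (F b z))" for b
    by (cases b) (simp_all add: K_F_True K_F_False bind_return_pmf map_bind_pmf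
                                bind_commute_pmf[of "bernoulli_pmf (1/2)"])
  have "bind_pmf (bitsum_randomizer n lam x) (\<lambda>y. map_pmf (\<lambda>c. (if y then 1 else 0) + c)
          (bind_pmf (blanket_split p ys) K))
      = bind_pmf (bernoulli_pmf p) (\<lambda>b. bind_pmf (blanket_split p ys) (\<lambda>z. K (F b z)))"
    unfolding bitsum_randomizer_def bind_assoc_pmf p_def[symmetric] by (simp add: step)
  also have "\<dots> = bind_pmf (blanket_split p (x # ys)) K"
    by (simp add: bind_map_pmf bind_assoc_pmf F_def)
  finally show ?thesis unfolding p_def .
qed

lemma count_dist_conv_blanket_split:
  "count_dist n lam xs = bind_pmf (blanket_split (lam / real n) xs)
     (\<lambda>(t, h). map_pmf (\<lambda>u. t + u) (binomial_pmf h (1/2)))"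
proof (induction xs)
  case Nil
  then show ?case by (simp add: count_dist_Nil binomial_pmf_0 bind_return_pmf)
next
  case (Cons x xs)
  show ?case
    unfolding count_dist_Cons Cons by (rule bind_randomizer_blanket_split) (rule binomial_pmf_half_Suc)
qed

definition remove_nth :: "nat \<Rightarrow> 'a list \<Rightarrow> 'a list" where
  "remove_nth i xs = take i xs @ drop (Suc i) xs"

lemma remove_nth_0_Cons [simp]: "remove_nth 0 (x # xs) = xs"
  by (simp add: remove_nth_def)

lemma length_remove_nth: "i < length xs \<Longrightarrow> length (remove_nth i xs) = length xs - 1"
  by (simp add: remove_nth_def)

lemma remove_nth_Suc_Cons [simp]: "remove_nth (Suc i) (x # xs) = x # remove_nth i xs"
  by (simp add: remove_nth_def)

lemma count_dist_Cons_conv_plus_blanket: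
  "count_dist n lam (x # xs) = bind_pmf (blanket_split (lam / real n) xs)
     (\<lambda>(t, h). map_pmf (\<lambda>c. t + c) (plus_blanket (bitsum_randomizer n lam x) h))"
proof -
  have "count_dist n lam (x # xs) = bind_pmf (blanket_split (lam / real n) xs) (\<lambda>z.
      bind_pmf (bitsum_randomizer n lam x) (\<lambda>y. map_pmf (\<lambda>c. (if y then 1 else 0) + c)
        ((\<lambda>(t, h). map_pmf (\<lambda>u. t + u) (binomial_pmf h (1/2))) z)))"
    unfolding count_dist_Cons count_dist_conv_blanket_split[of n lam xs] map_bind_pmf
    by (rule bind_commute_pmf)
  also have "\<dots> = bind_pmf (blanket_split (lam / real n) xs)
      (\<lambda>(t, h). map_pmf (\<lambda>c. t + c) (plus_blanket (bitsum_randomizer n lam x) h))"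
  proof (intro bind_pmf_cong refl)
    fix z :: "nat \<times> nat"
    obtain t h where z: "z = (t, h)" by force
    show "bind_pmf (bitsum_randomizer n lam x) (\<lambda>y. map_pmf (\<lambda>c. (if y then 1 else 0) + c)
        ((\<lambda>(t, h). map_pmf (\<lambda>u. t + u) (binomial_pmf h (1/2))) z)) =
       (\<lambda>(t, h). map_pmf (\<lambda>c. t + c) (plus_blanket (bitsum_randomizer n lam x) h)) z"
      unfolding z plus_blanket_def
      by (auto simp: map_bind_pmf map_pmf_comp add_ac intro!: bind_pmf_cong map_pmf_cong)
  qed
  finally show ?thesis .
qed

lemma count_dist_conv_plus_blanket:
  assumes "i < length X"
  shows "count_dist n lam X = bind_pmf (blanket_split (lam / real n) (remove_nth i X))
           (\<lambda>(t, h). map_pmf (\<lambda>c. t + c) (plus_blanket (bitsum_randomizer n lam (X ! i)) h))"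
  using assms
proof (induction X arbitrary: i)
  case Nil
  then show ?case by simp
next
  case (Cons x xs)
  show ?case
  proof (cases i)
    case 0
    show ?thesis unfolding 0 remove_nth_0_Cons nth_Cons_0 by (rule count_dist_Cons_conv_plus_blanket)
  next
    case (Suc j)
    then have j: "j < length xs" using Cons by simp
    have "count_dist n lam (x # xs) = bind_pmf (bitsum_randomizer n lam x)
        (\<lambda>y. map_pmf (\<lambda>c. (if y then 1 else 0) + c)
          (bind_pmf (blanket_split (lam / real n) (remove_nth j xs))
            (\<lambda>(t, h). map_pmf (\<lambda>u. t + u) (plus_blanket (bitsum_randomizer n lam (xs ! j)) h))))"
      unfolding count_dist_Cons Cons.IH[OF j] ..
    also have "\<dots> = bind_pmf (blanket_split (lam / real n) (x # remove_nth j xs))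
        (\<lambda>(t, h). map_pmf (\<lambda>u. t + u) (plus_blanket (bitsum_randomizer n lam (xs ! j)) h))"
      by (rule bind_randomizer_blanket_split) (rule plus_blanket_Suc)
    finally show ?thesis unfolding Suc remove_nth_Suc_Cons nth_Cons_Suc .
  qed
qed

lemma remove_nth_neighbours:
  assumes "length X = n" "length X' = n" "i < n" "\<forall>j<n. j \<noteq> i \<longrightarrow> X ! j = X' ! j"
  shows "remove_nth i X = remove_nth i X'"
  using assms by (intro nth_equalityI) (auto simp: remove_nth_def nth_append min_def)

definition report_true_prob :: "real \<Rightarrow> bool \<Rightarrow> real" where
  "report_true_prob p x = (if x then 1 - p / 2 else p / 2)"

lemma bitsum_randomizer_conv_bernoulli:
  assumes "0 \<le> lam / real n" "lam / real n \<le> 1"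
  shows "bitsum_randomizer n lam x = bernoulli_pmf (report_true_prob (lam / real n) x)"
proof (rule pmf_eqI)
  fix y :: bool
  show "pmf (bitsum_randomizer n lam x) y = pmf (bernoulli_pmf (report_true_prob (lam / real n) x)) y"
    using assms unfolding bitsum_randomizer_def report_true_prob_def
    by (cases x; cases y) (auto simp: pmf_bind algebra_simps)
qed

lemma set_pmf_plus_blanket: "set_pmf (plus_blanket D h) \<subseteq> {..Suc h}"
  unfolding plus_blanket_def by (auto simp: set_pmf_binomial_eq)

lemma pmf_plus_blanket_bernoulli:
  assumes "0 \<le> a" "a \<le> 1"
  shows "pmf (plus_blanket (bernoulli_pmf a) h) c = (1 - a) * pmf (binomial_pmf h (1/2)) c +
           (if c = 0 then 0 else a * pmf (binomial_pmf h (1/2)) (c - 1))"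
proof -
  have "(+) (0::nat) = id" "(+) (Suc 0) = Suc" by auto
  moreover have "pmf (map_pmf Suc (binomial_pmf h (1/2))) c =
      (if c = 0 then 0 else pmf (binomial_pmf h (1/2)) (c - 1))"
    by (cases c) (auto simp: pmf_eq_0_set_pmf pmf_map_inj')
  ultimately show ?thesis
    unfolding plus_blanket_def pmf_bind using assms
    by (simp del: pmf_binomial add: algebra_simps)
qed

lemma pmf_binomial_half: "k \<le> h \<Longrightarrow> pmf (binomial_pmf h (1/2)) k = real (h choose k) / 2 ^ h"
  by (simp add: power_add[symmetric] power_one_over)

lemma of_nat_mult_choose:
  assumes "1 \<le> c" "c \<le> h"
  shows "real c * real (h choose c) = (real h - real c + 1) * real (h choose (c - 1))"
proof -
  obtain k where k: "c = Suc k" using assms(1) by (cases c) auto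
  have "Suc k * (h choose Suc k) = (h - k) * (h choose k)"
    using binomial_absorption[of k h] binomial_absorb_comp[of h k] by simp
  then have "real (Suc k * (h choose Suc k)) = real ((h - k) * (h choose k))" by simp
  then show ?thesis using assms k by (simp add: of_nat_diff algebra_simps)
qed

text \<open>For \<open>1 \<le> c \<le> h\<close> the probability of count \<open>c\<close> is proportional to an affine function of the
  bias \<open>a\<close>, since \<open>c * (h choose c) = (h - c + 1) * (h choose (c - 1))\<close>.\<close>
lemma pmf_plus_blanket_bernoulli_affine:
  assumes "0 \<le> a" "a \<le> 1" "1 \<le> c" "c \<le> h"
  shows "(real h - real c + 1) * pmf (plus_blanket (bernoulli_pmf a) h) c =
           real (h choose c) / 2 ^ h * ((1 - a) * (real h - real c + 1) + a * real c)"
proof -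
  define M where "M = real h - real c + 1"
  define C1 where "C1 = real (h choose c)"
  define C0 where "C0 = real (h choose (c - 1))"
  have rel: "real c * C1 = M * C0"
    unfolding M_def C1_def C0_def by (rule of_nat_mult_choose[OF assms(3,4)])
  have "pmf (plus_blanket (bernoulli_pmf a) h) c = ((1 - a) * C1 + a * C0) / 2 ^ h"
    unfolding pmf_plus_blanket_bernoulli[OF assms(1,2)] C1_def C0_def using assms
    by (simp add: pmf_binomial_half add_divide_distrib del: pmf_binomial)
  moreover have "M * ((1 - a) * C1 + a * C0) = C1 * ((1 - a) * M + a * real c)"
    using rel by (simp add: algebra_simps)
  ultimately show ?thesis unfolding M_def[symmetric] C1_def[symmetric] by simp
qed

lemma affine_report_ratio:
  fixes h c p \<epsilon> :: real and x x' :: bool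
  assumes p: "0 \<le> p" "p \<le> 1" and \<epsilon>: "0 \<le> \<epsilon>" "\<epsilon> \<le> 1" and c: "0 \<le> c" "c \<le> h + 1"
    and close: "3 * (1 - p) * \<bar>2 * c - h - 1\<bar> \<le> \<epsilon> * (h + 1)"
  defines "a \<equiv> report_true_prob p x" and "b \<equiv> report_true_prob p x'"
  shows "(1 - a) * (h - c + 1) + a * c \<le> (1 + \<epsilon>) * ((1 - b) * (h - c + 1) + b * c)"
proof (cases "x = x'")
  case True
  have "0 \<le> (1 - a) * (h - c + 1) + a * c"
    using p c unfolding a_def report_true_prob_def by simp
  then have "0 \<le> \<epsilon> * ((1 - a) * (h - c + 1) + a * c)" using \<epsilon> by simp
  then show ?thesis using True unfolding a_def b_def by (simp add: distrib_right)
next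
  case False
  define q where "q = 1 - p"
  define D where "D = 2 * c - h - 1"
  have "q * \<bar>D\<bar> * (2 + \<epsilon>) \<le> q * \<bar>D\<bar> * 3"
    using p \<epsilon> unfolding q_def by (intro mult_left_mono) auto
  also have "\<dots> \<le> \<epsilon> * (h + 1)" using close unfolding q_def D_def by (simp add: algebra_simps)
  finally have qD: "q * \<bar>D\<bar> * (2 + \<epsilon>) \<le> \<epsilon> * (h + 1)" .
  have "\<bar>q * D * (2 + \<epsilon>)\<bar> = q * \<bar>D\<bar> * (2 + \<epsilon>)"
    using p \<epsilon> unfolding q_def by (simp add: abs_mult)
  then have "- (\<epsilon> * (h + 1)) \<le> q * D * (2 + \<epsilon>) \<and> q * D * (2 + \<epsilon>) \<le> \<epsilon> * (h + 1)"
    using qD by linarith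
  moreover have "(1 + \<epsilon>) * ((1 - b) * (h - c + 1) + b * c) - ((1 - a) * (h - c + 1) + a * c) =
      (if x then \<epsilon> * (h + 1) - q * D * (2 + \<epsilon>) else \<epsilon> * (h + 1) + q * D * (2 + \<epsilon>)) / 2"
    using False unfolding a_def b_def report_true_prob_def q_def D_def
    by (cases x) (simp_all add: field_simps)
  ultimately show ?thesis by (cases x) auto
qed

lemma pmf_plus_blanket_report_ratio:
  assumes p: "0 \<le> p" "p \<le> 1" and \<epsilon>: "0 \<le> \<epsilon>" "\<epsilon> \<le> 1" and c: "1 \<le> c" "c \<le> h"
    and close: "3 * (1 - p) * \<bar>2 * real c - real h - 1\<bar> \<le> \<epsilon> * (real h + 1)"
  shows "pmf (plus_blanket (bernoulli_pmf (report_true_prob p x)) h) c \<le>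
           exp \<epsilon> * pmf (plus_blanket (bernoulli_pmf (report_true_prob p x')) h) c"
proof -
  define a where "a = report_true_prob p x"
  define b where "b = report_true_prob p x'"
  define M where "M = real h - real c + 1"
  define K where "K = real (h choose c) / 2 ^ h"
  have ab: "0 \<le> a" "a \<le> 1" "0 \<le> b" "b \<le> 1"
    using p unfolding a_def b_def report_true_prob_def by auto
  have M: "0 < M" unfolding M_def using c by simp
  have "M * pmf (plus_blanket (bernoulli_pmf a) h) c = K * ((1 - a) * M + a * real c)"
    unfolding M_def K_def using pmf_plus_blanket_bernoulli_affine ab c by blast
  also have "\<dots> \<le> K * ((1 + \<epsilon>) * ((1 - b) * M + b * real c))"
    unfolding a_def b_def M_def K_def using p \<epsilon> c close
    by (intro mult_left_mono affine_report_ratio) auto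
  also have "\<dots> = (1 + \<epsilon>) * (M * pmf (plus_blanket (bernoulli_pmf b) h) c)"
    unfolding M_def K_def using pmf_plus_blanket_bernoulli_affine ab c by simp
  also have "\<dots> \<le> exp \<epsilon> * (M * pmf (plus_blanket (bernoulli_pmf b) h) c)"
    using M by (intro mult_right_mono) (auto simp: add.commute exp_ge_add_one_self)
  finally show ?thesis
    unfolding a_def b_def using M by (simp add: mult.left_commute[of M])
qed

lemma prob_plus_blanket_bernoulli_far:
  assumes "0 \<le> a" "a \<le> 1" "0 < h" "0 \<le> s"
  shows "measure_pmf.prob (plus_blanket (bernoulli_pmf a) h) {c. 2 * s + 1 < \<bar>2 * real c - real h - 1\<bar>}
           \<le> 2 * exp (- 2 * s\<^sup>2 / real h)"
proof -
  interpret binomial_distribution h "1/2" by unfold_locales simp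
  define S where "S = {c::nat. 2 * s + 1 < \<bar>2 * real c - real h - 1\<bar>}"
  define B where "B = {k::nat. s \<le> \<bar>real k - real h * (1/2)\<bar>}"
  have far: "measure_pmf.prob (map_pmf (\<lambda>u. (if y then 1 else 0) + u) (binomial_pmf h (1/2))) S
      \<le> 2 * exp (- 2 * s\<^sup>2 / real h)" for y
  proof -
    have "measure_pmf.prob (map_pmf (\<lambda>u. (if y then 1 else 0) + u) (binomial_pmf h (1/2))) S
        \<le> measure_pmf.prob (binomial_pmf h (1/2)) B"
      unfolding measure_map_pmf S_def B_def
      by (intro measure_pmf.finite_measure_mono) (cases y; auto)+
    also have "\<dots> \<le> 2 * exp (- 2 * s\<^sup>2 / real h)"
      unfolding B_def using prob_abs_ge[of s] assms by simp
    finally show ?thesis .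
  qed
  have "measure_pmf.prob (plus_blanket (bernoulli_pmf a) h) S
      = a * measure_pmf.prob (map_pmf (\<lambda>u. (if True then 1 else 0) + u) (binomial_pmf h (1/2))) S
        + (1 - a) * measure_pmf.prob (map_pmf (\<lambda>u. (if False then 1 else 0) + u) (binomial_pmf h (1/2))) S"
  proof -
    have "(+) (Suc 0) = Suc" "(+) (0::nat) = (\<lambda>k. k)" by auto
    then show ?thesis
      unfolding plus_blanket_def prob_bind_pmf using assms(1,2) by (simp add: algebra_simps)
  qed
  also have "\<dots> \<le> a * (2 * exp (- 2 * s\<^sup>2 / real h)) + (1 - a) * (2 * exp (- 2 * s\<^sup>2 / real h))"
    using far[of True] far[of False] assms(1,2) by (intro add_mono mult_left_mono) auto
  finally show ?thesis unfolding S_def by (simp add: algebra_simps)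
qed

text \<open>Conditioned on a blanket of \<open>h\<close> uniform bits, one user's message is hidden: counts within
  \<open>s + 1/2\<close> of the mean \<open>(h + 1)/2\<close> have comparable probabilities whatever the user's bit, and
  by Hoeffding's inequality the remaining counts are unlikely.\<close>
lemma plus_blanket_report_indistinguishable:
  assumes p: "0 \<le> p" "p \<le> 1" and \<epsilon>: "0 \<le> \<epsilon>" "\<epsilon> \<le> 1" and s: "0 \<le> s" "2 * s < real h"
    and close: "6 * (1 - p) * (s + 1/2) \<le> \<epsilon> * (real h + 1)"
  shows "indistinguishable \<epsilon> (2 * exp (- 2 * s\<^sup>2 / real h))
           (plus_blanket (bernoulli_pmf (report_true_prob p x)) h)
           (plus_blanket (bernoulli_pmf (report_true_prob p x')) h)"
proof (rule indistinguishable_pointwise)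
  define G where "G = {c::nat. \<bar>2 * real c - real h - 1\<bar> \<le> 2 * s + 1}"
  show "finite {..Suc h}" by simp
  show "set_pmf (plus_blanket (bernoulli_pmf (report_true_prob p x)) h) \<subseteq> {..Suc h}"
    and "set_pmf (plus_blanket (bernoulli_pmf (report_true_prob p x')) h) \<subseteq> {..Suc h}"
    by (rule set_pmf_plus_blanket)+
  show "pmf (plus_blanket (bernoulli_pmf (report_true_prob p x)) h) c \<le>
          exp \<epsilon> * pmf (plus_blanket (bernoulli_pmf (report_true_prob p x')) h) c" if "c \<in> G" for c
  proof (rule pmf_plus_blanket_report_ratio[OF p \<epsilon>])
    have D: "\<bar>2 * real c - real h - 1\<bar> \<le> 2 * s + 1" using that unfolding G_def by simp
    then show "1 \<le> c" "c \<le> h" using s by auto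
    have "3 * (1 - p) * \<bar>2 * real c - real h - 1\<bar> \<le> 3 * (1 - p) * (2 * s + 1)"
      using p D by (intro mult_left_mono) auto
    then show "3 * (1 - p) * \<bar>2 * real c - real h - 1\<bar> \<le> \<epsilon> * (real h + 1)"
      using close by (simp add: algebra_simps)
  qed
  have "- G = {c. 2 * s + 1 < \<bar>2 * real c - real h - 1\<bar>}" unfolding G_def by auto
  then show "measure_pmf.prob (plus_blanket (bernoulli_pmf (report_true_prob p x)) h) (- G)
      \<le> 2 * exp (- 2 * s\<^sup>2 / real h)"
    using prob_plus_blanket_bernoulli_far[of "report_true_prob p x" h s] p s
    by (simp add: report_true_prob_def)
qed

section \<open>A Chernoff bound for the size of the blanket\<close>

lemma expectation_binomial_pmf_power:
  fixes z :: real
  assumes "0 \<le> p" "p \<le> 1"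
  shows "measure_pmf.expectation (binomial_pmf N p) (\<lambda>h. z ^ h) = (p * z + (1 - p)) ^ N"
proof -
  have "measure_pmf.expectation (binomial_pmf N p) (\<lambda>h. z ^ h) =
      (\<Sum>k\<le>N. real (N choose k) * (p * z) ^ k * (1 - p) ^ (N - k))"
    using assms by (simp add: expectation_binomial_pmf' power_mult_distrib mult_ac)
  then show ?thesis by (simp add: binomial_ring)
qed

lemma prob_binomial_pmf_le_half_mean:
  assumes p: "0 \<le> p" "p \<le> 1"
  shows "measure_pmf.prob (binomial_pmf N p) {h. real h \<le> real N * p / 2} \<le> exp (- real N * p / 10)"
proof -
  define k where "k = real N * p / 2"
  define z where "z = exp (- 1 :: real)"
  have z: "0 < z" "z \<le> 2 / 5"
  proof -
    have "5 / 2 \<le> exp (1 :: real)" using exp_lower_Taylor_quadratic[of 1] by simp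
    then show "z \<le> 2 / 5" unfolding z_def by (simp add: exp_minus field_simps)
  qed (simp add: z_def)
  have markov: "indicator {h. real h \<le> k} j \<le> exp k * z ^ j" for j :: nat
  proof (cases "real j \<le> k")
    case True
    have "exp k * z ^ j = exp (k - real j)"
      unfolding z_def by (simp add: exp_diff exp_of_nat_mult[symmetric] exp_minus field_simps)
    then show ?thesis using True by simp
  qed (use z in simp)
  have "measure_pmf.prob (binomial_pmf N p) {h. real h \<le> k}
      = measure_pmf.expectation (binomial_pmf N p) (indicator {h. real h \<le> k})" by simp
  also have "\<dots> \<le> measure_pmf.expectation (binomial_pmf N p) (\<lambda>h. exp k * z ^ h)"
    using p markov by (intro integral_mono integrable_measure_pmf_finite) auto
  also have "\<dots> = exp k * (p * z + (1 - p)) ^ N"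
    using p by (simp add: expectation_binomial_pmf_power)
  also have "\<dots> \<le> exp k * exp (- p * (1 - z)) ^ N"
  proof -
    have "0 \<le> p * z" using p z by simp
    then show ?thesis
      using exp_ge_add_one_self[of "- p * (1 - z)"] p
      by (intro mult_left_mono power_mono) (auto simp: algebra_simps)
  qed
  also have "\<dots> = exp (k - real N * p * (1 - z))"
    by (simp add: exp_of_nat_mult[symmetric] exp_add[symmetric] algebra_simps)
  also have "\<dots> \<le> exp (- real N * p / 10)"
    using z p mult_left_mono[of "1/10" "1/2 - z" "real N * p"] unfolding k_def
    by (simp add: algebra_simps)
  finally show ?thesis unfolding k_def .
qed

lemma expectation_binomial_threshold:
  assumes p: "0 \<le> p" "p \<le> 1" and \<delta>: "0 \<le> \<delta>"
  shows "measure_pmf.expectation (binomial_pmf N p) (\<lambda>h. if real N * p / 2 < real h then \<delta> else 1)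
           \<le> \<delta> + exp (- real N * p / 10)"
proof -
  define low where "low = {h. real h \<le> real N * p / 2}"
  have "measure_pmf.expectation (binomial_pmf N p) (\<lambda>h. if real N * p / 2 < real h then \<delta> else 1)
      \<le> measure_pmf.expectation (binomial_pmf N p) (\<lambda>h. \<delta> + indicator low h)"
    using p \<delta> unfolding low_def
    by (intro integral_mono integrable_measure_pmf_finite) (auto simp: indicator_def)
  also have "\<dots> = \<delta> + measure_pmf.prob (binomial_pmf N p) low"
    using p by (subst Bochner_Integration.integral_add) (auto intro: integrable_measure_pmf_finite)
  also have "\<dots> \<le> \<delta> + exp (- real N * p / 10)"
    unfolding low_def using prob_binomial_pmf_le_half_mean[OF p] by simp
  finally show ?thesis .
qed

lemma expectation_blanket_split_threshold:
  fixes xs :: "bool list"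
  assumes "0 \<le> p" "p \<le> 1" "0 \<le> \<delta>"
  defines "N \<equiv> length xs"
  shows "measure_pmf.expectation (blanket_split p xs)
           (\<lambda>z. if real N * p / 2 < real (snd z) then \<delta> else 1) \<le> \<delta> + exp (- real N * p / 10)"
proof -
  define g where "g h = (if real N * p / 2 < real h then \<delta> else 1)" for h :: nat
  have "measure_pmf.expectation (blanket_split p xs) (\<lambda>z. g (snd z)) =
      measure_pmf.expectation (map_pmf snd (blanket_split p xs)) g" by simp
  also have "map_pmf snd (blanket_split p xs) = binomial_pmf N p"
    using blanket_size_binomial assms(1,2) unfolding N_def by simp
  finally show ?thesis
    using expectation_binomial_threshold[OF assms(1-3), of N] unfolding g_def by simp
qed

section \<open>Privacy of the shuffled protocol\<close>

text \<open>\<open>sqrt (h L / 2)\<close> is the radius at which Hoeffding's bound \<open>2 exp (- 2 s\<^sup>2 / h)\<close> equals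
  \<open>2 exp (- L)\<close>.\<close>
definition blanket_hides :: "real \<Rightarrow> real \<Rightarrow> real \<Rightarrow> nat \<Rightarrow> bool" where
  "blanket_hides p \<epsilon> L h \<longleftrightarrow>
     2 * L < real h \<and> 6 * (1 - p) * (sqrt (real h * L / 2) + 1/2) \<le> \<epsilon> * (real h + 1)"

text \<open>The blanket has about \<open>(n - 1) p\<close> bits. The first condition makes it smaller than half of that
  with probability at most \<open>exp (- L)\<close>, the second makes every larger blanket hide one user's bit
  up to \<open>\<delta> = 2 exp (- L)\<close>.\<close>
definition blanket_admissible :: "nat \<Rightarrow> real \<Rightarrow> real \<Rightarrow> real \<Rightarrow> bool" where
  "blanket_admissible n p \<epsilon> L \<longleftrightarrow> 0 \<le> p \<and> p \<le> 1 \<and> 10 * L \<le> real (n - 1) * p \<and>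
     (\<forall>h::nat. real (n - 1) * p / 2 < real h \<longrightarrow> blanket_hides p \<epsilon> L h)"

lemma blanket_hides_indistinguishable:
  assumes hides: "blanket_hides p \<epsilon> L h"
    and p: "0 \<le> p" "p \<le> 1" and \<epsilon>: "0 \<le> \<epsilon>" "\<epsilon> \<le> 1" and L: "0 < L"
  shows "indistinguishable \<epsilon> (2 * exp (- L))
           (plus_blanket (bernoulli_pmf (report_true_prob p x)) h)
           (plus_blanket (bernoulli_pmf (report_true_prob p x')) h)"
proof -
  define s where "s = sqrt (real h * L / 2)"
  have hL: "2 * L < real h" and close: "6 * (1 - p) * (s + 1/2) \<le> \<epsilon> * (real h + 1)"
    using hides unfolding blanket_hides_def s_def by auto
  have s2: "s\<^sup>2 = real h * L / 2" unfolding s_def using L by simp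
  have "real h * (2 * L) < real h * real h"
    using hL L by (intro mult_strict_left_mono) auto
  then have "(2 * s)\<^sup>2 < (real h)\<^sup>2"
    using s2 by (simp add: power2_eq_square power_mult_distrib)
  then have sh: "2 * s < real h" by (rule power2_less_imp_less) simp
  have "- 2 * s\<^sup>2 / real h = - L" using s2 hL L by (simp add: field_simps)
  moreover have "0 \<le> s" unfolding s_def using L by simp
  ultimately show ?thesis
    using plus_blanket_report_indistinguishable[OF p \<epsilon> _ sh close] by simp
qed

lemma count_dist_neighbours_indistinguishable:
  assumes adm: "blanket_admissible n (lam / real n) \<epsilon> L"
    and \<epsilon>: "0 \<le> \<epsilon>" "\<epsilon> \<le> 1" and L: "0 < L" and nb: "neighbours n X X'"
  shows "indistinguishable \<epsilon> (3 * exp (- L)) (count_dist n lam X) (count_dist n lam X')"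
proof -
  define p where "p = lam / real n"
  define N where "N = n - 1"
  have p: "0 \<le> p" "p \<le> 1" and tail: "10 * L \<le> real N * p"
    and hides: "\<And>h. real N * p / 2 < real h \<Longrightarrow> blanket_hides p \<epsilon> L h"
    using adm unfolding blanket_admissible_def p_def N_def by auto
  obtain i where i: "i < n" and agree: "\<forall>j<n. j \<noteq> i \<longrightarrow> X ! j = X' ! j"
    and len: "length X = n" "length X' = n"
    using nb unfolding neighbours_def by blast
  define B where "B = blanket_split p (remove_nth i X)"
  define K where "K x = (\<lambda>(t, h). map_pmf (\<lambda>c. t + c) (plus_blanket (bernoulli_pmf (report_true_prob p x)) h))"
    for x
  have count: "count_dist n lam Y = bind_pmf B (K (Y ! i))" if "length Y = n" "remove_nth i Y = remove_nth i X" for Y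
    using count_dist_conv_plus_blanket[of i Y n lam] that i bitsum_randomizer_conv_bernoulli p
    unfolding B_def K_def p_def by simp
  define \<delta> where "\<delta> z = (if real N * p / 2 < real (snd z) then 2 * exp (- L) else 1)" for z :: "nat \<times> nat"
  have "indistinguishable \<epsilon> (\<delta> z) (K (X ! i) z) (K (X' ! i) z)" for z
    using blanket_hides_indistinguishable[OF hides p \<epsilon> L]
    unfolding K_def \<delta>_def by (cases z) (simp add: indistinguishable_map_pmf indistinguishable_trivial)
  moreover have "0 \<le> \<delta> z \<and> \<delta> z \<le> 2" for z
    unfolding \<delta>_def using L by auto
  ultimately have "indistinguishable \<epsilon> (measure_pmf.expectation B \<delta>)
      (bind_pmf B (K (X ! i))) (bind_pmf B (K (X' ! i)))"
    by (intro indistinguishable_bind_pmf[where D = 2])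
  moreover have "measure_pmf.expectation B \<delta> \<le> 3 * exp (- L)"
  proof -
    have "length (remove_nth i X) = N" unfolding N_def using i len by (simp add: length_remove_nth)
    then have "measure_pmf.expectation B \<delta> \<le> 2 * exp (- L) + exp (- real N * p / 10)"
      unfolding B_def \<delta>_def using expectation_blanket_split_threshold[of p "2 * exp (- L)"] p by auto
    moreover have "exp (- real N * p / 10) \<le> exp (- L)" using tail by simp
    ultimately show ?thesis by linarith
  qed
  moreover have "remove_nth i X' = remove_nth i X"
    using remove_nth_neighbours[OF len i agree] by simp
  ultimately show ?thesis
    using count[OF len(1)] count[of X'] len(2) by (auto intro: indistinguishable_mono)
qed

lemma bitsum_shuffled_diff_private:
  assumes "blanket_admissible n (lam / real n) \<epsilon> L" "0 \<le> \<epsilon>" "\<epsilon> \<le> 1" "0 < L"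
    and "3 * exp (- L) \<le> \<delta>"
  shows "diff_private n \<epsilon> \<delta> (bitsum_shuffled n lam)"
  unfolding diff_private_def
proof (intro allI impI)
  fix X X' :: "bool list" and T assume nb: "neighbours n X X'"
  then have "length X = n" "length X' = n" unfolding neighbours_def by auto
  moreover have "indistinguishable \<epsilon> \<delta> (count_dist n lam X) (count_dist n lam X')"
    using count_dist_neighbours_indistinguishable[OF assms(1-4) nb] assms(5)
    by (rule indistinguishable_mono)
  ultimately show "measure_pmf.prob (bitsum_shuffled n lam X) T
      \<le> exp \<epsilon> * measure_pmf.prob (bitsum_shuffled n lam X') T + \<delta>"
    unfolding bitsum_shuffled_conv_count_dist by (simp add: indistinguishable_prob_bind_pmf)
qed

section \<open>The two choices of lambda\<close>

lemma blanket_hides_large_eps: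
  assumes L: "1 < L" and \<epsilon>: "0 < \<epsilon>" "\<epsilon> \<le> 1" and p: "0 \<le> p"
    and h: "31 * L < \<epsilon>\<^sup>2 * real h"
  shows "blanket_hides p \<epsilon> L h"
  unfolding blanket_hides_def
proof
  define S where "S = sqrt (real h * L / 2)"
  have "\<epsilon>\<^sup>2 \<le> \<epsilon>" using \<epsilon> by (simp add: power2_eq_square mult_left_le_one_le)
  then have \<epsilon>h: "\<epsilon>\<^sup>2 * real h \<le> \<epsilon> * real h" "\<epsilon> * real h \<le> real h"
    using \<epsilon> by (simp_all add: mult_right_mono mult_left_le_one_le)
  then show "2 * L < real h" using h L by linarith
  have S0: "0 \<le> S" and S2: "S\<^sup>2 = real h * L / 2" unfolding S_def using L by simp_all
  have "(6 * S)\<^sup>2 = 18 * L * real h" unfolding power_mult_distrib S2 by simp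
  also have "\<dots> \<le> (7/8 * (\<epsilon> * real h))\<^sup>2"
    using h L mult_right_mono[of "18 * L" "49/64 * (\<epsilon>\<^sup>2 * real h)" "real h"]
    by (simp add: power_mult_distrib power2_eq_square algebra_simps)
  finally have "6 * S \<le> 7/8 * (\<epsilon> * real h)"
    by (rule power2_le_imp_le) (use \<epsilon> in simp)
  moreover have "3 \<le> 1/8 * (\<epsilon> * real h)" using h L \<epsilon>h by linarith
  moreover have "6 * (1 - p) * (S + 1/2) \<le> 6 * (S + 1/2)"
    using p S0 by (intro mult_right_mono) auto
  ultimately show "6 * (1 - p) * (sqrt (real h * L / 2) + 1/2) \<le> \<epsilon> * (real h + 1)"
    unfolding S_def[symmetric] using \<epsilon> by (simp add: algebra_simps)
qed

lemma blanket_admissible_large_eps: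
  assumes L: "1 < L" and n: "58 < real n" and \<epsilon>: "0 < \<epsilon>" "\<epsilon> \<le> 1"
    and large: "sqrt (192 / real n * L) \<le> \<epsilon>"
  shows "blanket_admissible n (64 / \<epsilon>\<^sup>2 * L / real n) \<epsilon> L"
proof -
  define p where "p = 64 / \<epsilon>\<^sup>2 * L / real n"
  have \<epsilon>2: "0 < \<epsilon>\<^sup>2" "\<epsilon>\<^sup>2 \<le> 1" using \<epsilon> by (auto simp: power_le_one)
  have x0: "0 \<le> 192 / real n * L" using L n by simp
  have "(sqrt (192 / real n * L))\<^sup>2 \<le> \<epsilon>\<^sup>2" using large by (intro power_mono) (use x0 in auto)
  then have "192 / real n * L \<le> \<epsilon>\<^sup>2" using x0 by simp
  then have "64 * L \<le> \<epsilon>\<^sup>2 * real n" using n L by (simp add: field_simps)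
  then have p01: "0 \<le> p" "p \<le> 1" unfolding p_def using \<epsilon>2 n L by (simp_all add: field_simps)
  have "62 * L / \<epsilon>\<^sup>2 \<le> 64 * L / \<epsilon>\<^sup>2 * ((real n - 1) / real n)"
    using n L \<epsilon>2 by (simp add: field_simps)
  also have "\<dots> = real (n - 1) * p" unfolding p_def using n by (simp add: of_nat_diff field_simps)
  finally have mean: "62 * L / \<epsilon>\<^sup>2 \<le> real (n - 1) * p" .
  moreover have "62 * L \<le> 62 * L / \<epsilon>\<^sup>2" using L \<epsilon>2 by (simp add: field_simps)
  ultimately have "10 * L \<le> real (n - 1) * p" using L by linarith
  moreover have "blanket_hides p \<epsilon> L h" if "real (n - 1) * p / 2 < real h" for h
  proof (rule blanket_hides_large_eps[OF L \<epsilon> p01(1)])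
    have "31 * L / \<epsilon>\<^sup>2 < real h" using that mean by simp
    then show "31 * L < \<epsilon>\<^sup>2 * real h" using \<epsilon>2 by (simp add: field_simps)
  qed
  ultimately show ?thesis
    unfolding blanket_admissible_def p_def[symmetric] using p01 by blast
qed

lemma blanket_hides_small_eps:
  assumes L: "1 < L" and n: "58 * L < real n" and \<epsilon>: "0 \<le> \<epsilon>"
    and q: "1 - p = \<epsilon> * sqrt (real n) / sqrt (432 * L)"
    and h: "(real n - 1) / 6 < real h"
  shows "blanket_hides p \<epsilon> L h"
  unfolding blanket_hides_def
proof
  define S where "S = sqrt (real h * L / 2)"
  have q2: "(1 - p)\<^sup>2 = \<epsilon>\<^sup>2 * real n / (432 * L)"
    unfolding q using n L by (simp add: power_divide power_mult_distrib)
  have S2: "S\<^sup>2 = real h * L / 2" unfolding S_def using L by simp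
  have "real n - 1 < 6 * real h" using h by simp
  then show "2 * L < real h" using n L by linarith
  have "(6 * (1 - p) * S)\<^sup>2 = real n / 24 * (\<epsilon>\<^sup>2 * real h)"
    unfolding power_mult_distrib q2 S2 using L by (simp add: field_simps)
  also have "\<dots> \<le> (9/16 * real h) * (\<epsilon>\<^sup>2 * real h)"
    by (rule mult_right_mono) (use h n L in simp_all)
  also have "\<dots> = (3/4 * (\<epsilon> * real h))\<^sup>2"
    by (simp add: power_mult_distrib power2_eq_square)
  finally have S_part: "6 * (1 - p) * S \<le> 3/4 * (\<epsilon> * real h)"
    by (rule power2_le_imp_le) (use \<epsilon> in simp)
  have "(12 * (1 - p))\<^sup>2 = \<epsilon>\<^sup>2 * (real n / (3 * L))"
    unfolding power_mult_distrib q2 using L by (simp add: field_simps)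
  also have "\<dots> \<le> \<epsilon>\<^sup>2 * (real h)\<^sup>2"
  proof (rule mult_left_mono)
    have "real n / (3 * L) \<le> real n / 3" using L n by (intro divide_left_mono) auto
    also have "\<dots> \<le> ((real n - 1) / 6)\<^sup>2"
      using n L mult_right_mono[of 57 "real n - 1" "real n - 1"]
      by (simp add: power2_eq_square field_simps)
    also have "\<dots> \<le> (real h)\<^sup>2" using h n L by (intro power_mono) auto
    finally show "real n / (3 * L) \<le> (real h)\<^sup>2" .
  qed simp
  also have "\<dots> = (\<epsilon> * real h)\<^sup>2" by (simp add: power_mult_distrib)
  finally have "12 * (1 - p) \<le> \<epsilon> * real h"
    by (rule power2_le_imp_le) (use \<epsilon> in simp)
  then show "6 * (1 - p) * (sqrt (real h * L / 2) + 1/2) \<le> \<epsilon> * (real h + 1)"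
    using S_part \<epsilon> unfolding S_def[symmetric] by (simp add: algebra_simps)
qed

lemma blanket_admissible_small_eps:
  assumes L: "1 < L" and n: "58 * L < real n" and \<epsilon>: "0 < \<epsilon>"
    and small: "\<epsilon> < sqrt (192 / real n * L)"
  shows "blanket_admissible n ((real n - \<epsilon> * real n powr (3/2) / sqrt (432 * L)) / real n) \<epsilon> L"
proof -
  define p where "p = (real n - \<epsilon> * real n powr (3/2) / sqrt (432 * L)) / real n"
  define q where "q = \<epsilon> * sqrt (real n) / sqrt (432 * L)"
  have n0: "0 < real n" using n L by linarith
  have "real n powr (3/2) = real n * sqrt (real n)"
    using n0 powr_add[of "real n" 1 "1/2"] by (simp add: powr_half_sqrt)
  then have pq: "1 - p = q" unfolding p_def q_def using n0 by (simp add: field_simps)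
  have "\<epsilon>\<^sup>2 < (sqrt (192 / real n * L))\<^sup>2"
    using small \<epsilon> by (intro power_strict_mono) auto
  then have "\<epsilon>\<^sup>2 < 192 / real n * L" using n0 L by simp
  then have "q\<^sup>2 < (2/3)\<^sup>2"
    unfolding q_def using n0 L by (simp add: power_divide power_mult_distrib field_simps)
  then have "q < 2/3" by (rule power2_less_imp_less) simp
  moreover have "0 \<le> q" unfolding q_def using \<epsilon> L by simp
  ultimately have p: "0 \<le> p" "p \<le> 1" "1/3 \<le> p" using pq by linarith+
  have rn: "real (n - 1) = real n - 1" using n0 by (simp add: of_nat_diff)
  have mean: "(real n - 1) / 3 \<le> real (n - 1) * p"
    unfolding rn using n L p by (simp add: mult_left_mono[of "1/3" p "real n - 1"])
  moreover have "30 * L \<le> real n - 1" using n L by linarith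
  then have "10 * L \<le> (real n - 1) / 3" by simp
  ultimately have "10 * L \<le> real (n - 1) * p" by linarith
  moreover have "blanket_hides p \<epsilon> L h" if "real (n - 1) * p / 2 < real h" for h
  proof (rule blanket_hides_small_eps[OF L n less_imp_le[OF \<epsilon>]])
    show "1 - p = \<epsilon> * sqrt (real n) / sqrt (432 * L)" using pq unfolding q_def .
    show "(real n - 1) / 6 < real h" using that mean by linarith
  qed
  ultimately show ?thesis
    unfolding blanket_admissible_def p_def[symmetric] using p by blast
qed

lemma one_less_ln_four_div:
  fixes \<delta> :: real
  assumes "0 < \<delta>" "\<delta> < 1"
  shows "1 < ln (4 / \<delta>)"
proof -
  have "4 < 4 / \<delta>" using assms by (simp add: field_simps)
  then have "exp 1 < 4 / \<delta>" using exp_le by linarith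
  then have "ln (exp 1) < ln (4 / \<delta>)" using assms(1) by (subst ln_less_cancel_iff) auto
  then show ?thesis by simp
qed

lemma large_sample_of_eps_bounds:
  assumes n: "0 < real n" and L: "1 < L" and \<epsilon>: "sqrt 3456 / real n * L < \<epsilon>" "\<epsilon> < 1"
  shows "58 * L < real n" "0 < \<epsilon>"
proof -
  have "58 * L \<le> sqrt 3456 * L" using L by (intro mult_right_mono real_le_rsqrt) auto
  moreover have "sqrt 3456 * L < \<epsilon> * real n" using \<epsilon>(1) n by (simp add: field_simps)
  moreover have "\<epsilon> * real n < real n" using \<epsilon>(2) n by simp
  ultimately show "58 * L < real n" by linarith
  have "0 \<le> sqrt 3456 / real n * L" using n L by simp
  then show "0 < \<epsilon>" using \<epsilon>(1) by linarith
qed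

theorem lemma4p8:
  fixes n :: nat and \<epsilon> \<delta> lam :: real
  assumes "0 < \<delta>" and "\<delta> < 1"
    and "real n \<ge> 14 * ln (4 / \<delta>)"
    and "sqrt 3456 / real n * ln (4 / \<delta>) < \<epsilon>" and "\<epsilon> < 1"
    and "lam = (if \<epsilon> \<ge> sqrt (192 / real n * ln (4 / \<delta>))
                then 64 / \<epsilon>\<^sup>2 * ln (4 / \<delta>)
                else real n - \<epsilon> * real n powr (3/2) / sqrt (432 * ln (4 / \<delta>)))"
  shows "diff_private n \<epsilon> \<delta> (bitsum_shuffled n lam)"
proof -
  define L where "L = ln (4 / \<delta>)"
  have L: "1 < L" unfolding L_def using assms(1,2) by (rule one_less_ln_four_div)
  have \<delta>: "\<delta> = 4 * exp (- L)" unfolding L_def using assms(1) by (simp add: exp_minus)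
  txt \<open>\<open>n \<ge> 14 L\<close> only rules out \<open>n = 0\<close>, where \<open>x / 0 = 0\<close> makes the lower bound on \<open>\<epsilon>\<close> vacuous;
    for \<open>n > 0\<close> that bound gives the stronger \<open>n > 58 L\<close>.\<close>
  have "0 < real n" using assms(3) L unfolding L_def by linarith
  then have n: "58 * L < real n" and \<epsilon>: "0 < \<epsilon>"
    using large_sample_of_eps_bounds L assms(4,5) unfolding L_def by blast+
  have "blanket_admissible n (lam / real n) \<epsilon> L"
  proof (cases "sqrt (192 / real n * L) \<le> \<epsilon>")
    case True
    then show ?thesis using blanket_admissible_large_eps[OF L _ \<epsilon> _ True] assms(5,6) n L
      unfolding L_def by simp
  next
    case False
    then show ?thesis using blanket_admissible_small_eps[OF L n \<epsilon>] assms(6)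
      unfolding L_def by simp
  qed
  then show ?thesis
    by (rule bitsum_shuffled_diff_private) (use \<epsilon> assms(5) L \<delta> in auto)
qed

end
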